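(* Let $(\varepsilon_t)_{t\in\mathbb{Z}}$ be i.i.d. copies of a random variable $\varepsilon$, let $Y$ be a measurable function and $X_t=Y(\varepsilon_t,\varepsilon_{t-1},\varepsilon_{t-2},\dots)$. Let $(\varepsilon_t^* )_{t\in\mathbb{Z}}$ be an i.i.d. copy of $(\varepsilon_t)_{t\in\mathbb{Z}}$, independent of it, and $X_t'=Y(\varepsilon_t,\dots,\varepsilon_1,\varepsilon_0^*,\varepsilon_{-1}^*,\dots)$. Let $F_X(x)=\mathbb{P}(X_0\le x)$, fix $\tau\in(0,1)$ and let $\xi_0(\tau)=\inf\{x:F_X(x)\ge\tau\}$. Suppose $F_X$ is Lipschitz continuous in a neighborhood of $\xi_0(\tau)$ and that $(\mathbb{E}|X_n-X_n'|^\alpha)^{1/\alpha}=O(\varrho^n)$ as $n\to\infty$ for some $\alpha>0$ and $\varrho\in(0,1)$. Then there exist $\delta>0$ and $\sigma\in(0,1)$ such that $$\sup_{\xi\in\mathbb{R}:\,|\xi-\xi_0(\tau)|\le\delta}\big(\mathbb{E}|1\{X_n<\xi\}-1\{X_n'<\xi\}|^2\big)^{1/2}=O(\sigma^n).$$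
   Context: $1\{\cdot\}$ denotes the indicator function. *)

theory Defs
  imports "HOL-Probability.Probability" "HOL-Library.Landau_Symbols"
begin

definition Xproc :: "((nat \<Rightarrow> 'b) \<Rightarrow> real) \<Rightarrow> (int \<Rightarrow> 'a \<Rightarrow> 'b) \<Rightarrow> int \<Rightarrow> 'a \<Rightarrow> real" where
  "Xproc Y eps t \<omega> = Y (\<lambda>k. eps (t - int k) \<omega>)"

definition Xcoupled :: "((nat \<Rightarrow> 'b) \<Rightarrow> real) \<Rightarrow> (int \<Rightarrow> 'a \<Rightarrow> 'b) \<Rightarrow> (int \<Rightarrow> 'a \<Rightarrow> 'b)
    \<Rightarrow> nat \<Rightarrow> 'a \<Rightarrow> real" where
  "Xcoupled Y eps epss n \<omega> =
     Y (\<lambda>k. if k < n then eps (int n - int k) \<omega> else epss (int n - int k) \<omega>)"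

end

theory Submission
  imports Defs
begin

text \<open>
  If \<open>1{X\<^sub>n < \<xi>}\<close> and \<open>1{X'\<^sub>n < \<xi>}\<close> differ, then either \<open>X\<^sub>n\<close> lies within \<open>h\<close> of \<open>\<xi>\<close>
  or \<open>|X\<^sub>n - X'\<^sub>n| \<ge> h\<close>. Since \<open>X\<^sub>n\<close> has the law of \<open>X\<^sub>0\<close>, the first event has probability
  at most \<open>2Lh\<close> when \<open>F\<^sub>X\<close> is \<open>L\<close>-Lipschitz near \<open>\<xi>\<^sub>0(\<tau>)\<close>; by Markov's inequality the second
  has probability at most \<open>E|X\<^sub>n - X'\<^sub>n|^\<alpha> / h^\<alpha> = O(\<rho>^(n\<alpha>) / h^\<alpha>)\<close>.
  The choice \<open>h = \<rho>^(n/2)\<close> makes both bounds geometric in \<open>n\<close>.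
\<close>

lemma (in prob_space) indep_sets_reindex:
  assumes indep: "indep_sets F (g ` J)" and inj: "inj_on g J"
  shows "indep_sets (\<lambda>j. F (g j)) J"
proof (rule indep_setsI)
  fix j assume "j \<in> J" then show "F (g j) \<subseteq> events"
    using indep unfolding indep_sets_def by auto
next
  fix A K assume K: "K \<noteq> {}" "K \<subseteq> J" "finite K" "\<forall>j\<in>K. A j \<in> F (g j)"
  define B where "B i = A (inv_into K g i)" for i
  have inj_K: "inj_on g K" using inj K(2) inj_on_subset by blast
  have B: "B (g j) = A j" if "j \<in> K" for j
    using inj_K that by (simp add: B_def)
  have "prob (\<Inter>i\<in>g ` K. B i) = (\<Prod>i\<in>g ` K. prob (B i))"
    by (rule indep_setsD[OF indep]) (use K B in auto)
  also have "(\<Inter>i\<in>g ` K. B i) = (\<Inter>j\<in>K. A j)" using B by auto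
  also have "(\<Prod>i\<in>g ` K. prob (B i)) = (\<Prod>j\<in>K. prob (A j))"
    using prod.reindex[OF inj_K, of "\<lambda>i. prob (B i)"] B by simp
  finally show "prob (\<Inter>j\<in>K. A j) = (\<Prod>j\<in>K. prob (A j))" .
qed

lemma (in prob_space) indep_vars_reindex:
  assumes "indep_vars M' X I" "inj_on g J" "g ` J \<subseteq> I"
  shows "indep_vars (\<lambda>j. M' (g j)) (\<lambda>j. X (g j)) J"
proof -
  have "indep_sets (\<lambda>i. sigma_sets (space M) {X i -` A \<inter> space M | A. A \<in> sets (M' i)}) I"
    and rv: "\<forall>i\<in>I. random_variable (M' i) (X i)"
    using assms(1) unfolding indep_vars_def by auto
  then have "indep_sets (\<lambda>i. sigma_sets (space M) {X i -` A \<inter> space M | A. A \<in> sets (M' i)}) (g ` J)"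
    using indep_sets_mono_index assms(3) by blast
  from indep_sets_reindex[OF this assms(2)] show ?thesis
    unfolding indep_vars_def using rv assms(3) by auto
qed

lemma measurable_Xproc:
  assumes "\<And>t. eps t \<in> measurable M N" "Y \<in> borel_measurable (PiM UNIV (\<lambda>_::nat. N))"
  shows "Xproc Y eps t \<in> borel_measurable M"
proof -
  have "(\<lambda>\<omega>. \<lambda>k\<in>UNIV. eps (t - int k) \<omega>) \<in> measurable M (PiM UNIV (\<lambda>_::nat. N))"
    using assms(1) by (intro measurable_restrict) auto
  from measurable_compose[OF this assms(2)] show ?thesis
    by (simp add: Xproc_def[abs_def] restrict_def)
qed

lemma measurable_Xcoupled:
  assumes "\<And>t. eps t \<in> measurable M N" "\<And>t. epss t \<in> measurable M N"
    "Y \<in> borel_measurable (PiM UNIV (\<lambda>_::nat. N))"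
  shows "Xcoupled Y eps epss n \<in> borel_measurable M"
proof -
  have "(\<lambda>\<omega>. \<lambda>k\<in>UNIV. if k < n then eps (int n - int k) \<omega> else epss (int n - int k) \<omega>)
     \<in> measurable M (PiM UNIV (\<lambda>_::nat. N))"
    using assms(1,2) by (intro measurable_restrict) auto
  from measurable_compose[OF this assms(3)] show ?thesis
    by (simp add: Xcoupled_def[abs_def] restrict_def)
qed

lemma (in prob_space) distr_Xproc:
  assumes meas_eps: "\<And>t. eps t \<in> measurable M N"
    and indep: "indep_vars (\<lambda>_. N) eps UNIV"
    and ident: "\<And>t. distr M N (eps t) = distr M N (eps 0)"
    and meas_Y: "Y \<in> borel_measurable (PiM UNIV (\<lambda>_::nat. N))"
  shows "distr M borel (Xproc Y eps t) = distr (PiM UNIV (\<lambda>_::nat. distr M N (eps 0))) borel Y"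
proof -
  define Z where "Z = (\<lambda>\<omega>. \<lambda>k\<in>UNIV. eps (t - int k) \<omega>)"
  have "indep_vars (\<lambda>_. N) (\<lambda>k::nat. eps (t - int k)) UNIV"
    using indep_vars_reindex[OF indep, of "\<lambda>k::nat. t - int k" UNIV] by (simp add: inj_on_def)
  then have "distr M (PiM UNIV (\<lambda>_::nat. N)) Z = PiM UNIV (\<lambda>k::nat. distr M N (eps (t - int k)))"
    using indep_vars_iff_distr_eq_PiM[where I=UNIV and M'="\<lambda>_. N" and X="\<lambda>k::nat. eps (t - int k)"] meas_eps
    by (simp add: Z_def)
  also have "\<dots> = PiM UNIV (\<lambda>_::nat. distr M N (eps 0))"
    by (rule PiM_cong) (auto intro: ident)
  finally have distr_Z: "distr M (PiM UNIV (\<lambda>_::nat. N)) Z = PiM UNIV (\<lambda>_::nat. distr M N (eps 0))" .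
  have meas_Z: "Z \<in> measurable M (PiM UNIV (\<lambda>_::nat. N))"
    unfolding Z_def using meas_eps by (intro measurable_restrict) auto
  have "Xproc Y eps t = Y \<circ> Z" by (simp add: fun_eq_iff Xproc_def Z_def restrict_def)
  then show ?thesis using distr_distr[OF meas_Y meas_Z] distr_Z by simp
qed

lemma (in prob_space) prob_interval_le_lipschitz_cdf:
  fixes X Z :: "'a \<Rightarrow> real"
  assumes [measurable]: "X \<in> borel_measurable M" "Z \<in> borel_measurable M"
    and same_distr: "distr M borel X = distr M borel Z"
    and lip: "L-lipschitz_on {u..v} (\<lambda>x. prob {\<omega>\<in>space M. Z \<omega> \<le> x})"
    and ab: "u \<le> a" "a \<le> b" "b \<le> v"
  shows "prob {\<omega>\<in>space M. a < X \<omega> \<and> X \<omega> \<le> b} \<le> L * (b - a)"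
proof -
  have "prob {\<omega>\<in>space M. a < X \<omega> \<and> X \<omega> \<le> b} = measure (distr M borel X) {a<..b}"
    by (subst measure_distr) (auto intro!: arg_cong[where f=prob])
  also have "\<dots> = measure (distr M borel Z) {a<..b}" by (simp add: same_distr)
  also have "\<dots> = prob ({\<omega>\<in>space M. Z \<omega> \<le> b} - {\<omega>\<in>space M. Z \<omega> \<le> a})"
    by (subst measure_distr) (auto intro!: arg_cong[where f=prob])
  also have "\<dots> = prob {\<omega>\<in>space M. Z \<omega> \<le> b} - prob {\<omega>\<in>space M. Z \<omega> \<le> a}"
    by (subst finite_measure_Diff) (use ab in auto)
  also have "\<dots> \<le> L * (b - a)"
    using lipschitz_onD[OF lip, of b a] ab by (simp add: dist_real_def)
  finally show ?thesis .
qed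

lemma (in prob_space) expectation_sq_of_bool_diff:
  assumes [measurable]: "Measurable.pred M P" "Measurable.pred M Q"
  shows "expectation (\<lambda>\<omega>. \<bar>of_bool (P \<omega>) - of_bool (Q \<omega>)\<bar> ^ 2 :: real)
       = prob {\<omega>\<in>space M. P \<omega> \<noteq> Q \<omega>}"
proof -
  have "expectation (\<lambda>\<omega>. \<bar>of_bool (P \<omega>) - of_bool (Q \<omega>)\<bar> ^ 2 :: real)
      = expectation (indicator {\<omega>\<in>space M. P \<omega> \<noteq> Q \<omega>})"
    by (rule Bochner_Integration.integral_cong) (auto simp: indicator_def)
  then show ?thesis by simp
qed

lemma (in prob_space) prob_threshold_disagree_le:
  fixes X X' :: "'a \<Rightarrow> real"
  assumes [measurable]: "X \<in> borel_measurable M" "X' \<in> borel_measurable M"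
    and integrable: "integrable M (\<lambda>\<omega>. \<bar>X \<omega> - X' \<omega>\<bar> powr \<alpha>)"
    and "0 \<le> \<alpha>" "0 < h"
  shows "prob {\<omega>\<in>space M. (X \<omega> < \<xi>) \<noteq> (X' \<omega> < \<xi>)}
    \<le> prob {\<omega>\<in>space M. \<xi> - h < X \<omega> \<and> X \<omega> \<le> \<xi> + h}
       + expectation (\<lambda>\<omega>. \<bar>X \<omega> - X' \<omega>\<bar> powr \<alpha>) / h powr \<alpha>"
proof -
  let ?near = "{\<omega>\<in>space M. \<xi> - h < X \<omega> \<and> X \<omega> \<le> \<xi> + h}"
  let ?far = "{\<omega>\<in>space M. h powr \<alpha> \<le> \<bar>X \<omega> - X' \<omega>\<bar> powr \<alpha>}"
  have "{\<omega>\<in>space M. (X \<omega> < \<xi>) \<noteq> (X' \<omega> < \<xi>)} \<subseteq> ?near \<union> ?far"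
  proof
    fix \<omega> assume \<omega>: "\<omega> \<in> {\<omega>\<in>space M. (X \<omega> < \<xi>) \<noteq> (X' \<omega> < \<xi>)}"
    show "\<omega> \<in> ?near \<union> ?far"
    proof (cases "h \<le> \<bar>X \<omega> - X' \<omega>\<bar>")
      case True
      then have "h powr \<alpha> \<le> \<bar>X \<omega> - X' \<omega>\<bar> powr \<alpha>" using assms by (intro powr_mono2) auto
      then show ?thesis using \<omega> by auto
    qed (use \<omega> in auto)
  qed
  then have "prob {\<omega>\<in>space M. (X \<omega> < \<xi>) \<noteq> (X' \<omega> < \<xi>)} \<le> prob (?near \<union> ?far)"
    by (intro finite_measure_mono) auto
  also have "\<dots> \<le> prob ?near + prob ?far"
    by (rule measure_subadditive) (auto simp: emeasure_eq_measure)
  also have "prob ?far \<le> expectation (\<lambda>\<omega>. \<bar>X \<omega> - X' \<omega>\<bar> powr \<alpha>) / h powr \<alpha>"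
    using integrable \<open>0 < h\<close> by (intro integral_Markov_inequality_measure[where A="{}"]) auto
  finally show ?thesis by simp
qed

lemma powr_moment_div_le:
  fixes m c h \<alpha> :: real
  assumes "0 \<le> m" "0 < \<alpha>" "0 < h" "m powr (1/\<alpha>) \<le> c * h\<^sup>2"
  shows "m / h powr \<alpha> \<le> c powr \<alpha> * h powr \<alpha>"
proof -
  have c: "0 \<le> c"
    using assms zero_le_mult_iff[of c "h\<^sup>2"] by (smt (verit) powr_ge_zero zero_less_power)
  have "m = (m powr (1/\<alpha>)) powr \<alpha>" using assms by (simp add: powr_powr)
  also have "\<dots> \<le> (c * h\<^sup>2) powr \<alpha>" using assms by (intro powr_mono2) auto
  also have "\<dots> = c powr \<alpha> * h powr \<alpha> * h powr \<alpha>"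
    using c assms by (simp add: powr_mult power2_eq_square)
  finally show ?thesis using assms by (simp add: divide_simps)
qed

lemma (in prob_space) expectation_threshold_disagree_le:
  fixes X X' :: "'a \<Rightarrow> real"
  assumes [measurable]: "X \<in> borel_measurable M" "X' \<in> borel_measurable M"
    and "integrable M (\<lambda>\<omega>. \<bar>X \<omega> - X' \<omega>\<bar> powr \<alpha>)" "0 < \<alpha>" "0 < h"
    and near: "prob {\<omega>\<in>space M. \<xi> - h < X \<omega> \<and> X \<omega> \<le> \<xi> + h} \<le> B"
    and moment: "expectation (\<lambda>\<omega>. \<bar>X \<omega> - X' \<omega>\<bar> powr \<alpha>) powr (1/\<alpha>) \<le> c * h\<^sup>2"
  shows "expectation (\<lambda>\<omega>. \<bar>of_bool (X \<omega> < \<xi>) - of_bool (X' \<omega> < \<xi>)\<bar> ^ 2 :: real)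
       \<le> B + c powr \<alpha> * h powr \<alpha>"
proof -
  have "expectation (\<lambda>\<omega>. \<bar>X \<omega> - X' \<omega>\<bar> powr \<alpha>) / h powr \<alpha> \<le> c powr \<alpha> * h powr \<alpha>"
    using assms by (intro powr_moment_div_le Bochner_Integration.integral_nonneg) auto
  then show ?thesis
    using expectation_sq_of_bool_diff[of "\<lambda>\<omega>. X \<omega> < \<xi>" "\<lambda>\<omega>. X' \<omega> < \<xi>"]
      prob_threshold_disagree_le[of X X' \<alpha> h \<xi>] assms by fastforce
qed

lemma abs_cSUP_le_of_nonneg:
  fixes f :: "'a \<Rightarrow> real"
  assumes "x \<in> S" "\<And>\<xi>. \<xi> \<in> S \<Longrightarrow> 0 \<le> f \<xi>" "\<And>\<xi>. \<xi> \<in> S \<Longrightarrow> f \<xi> \<le> B"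
  shows "\<bar>SUP \<xi>\<in>S. f \<xi>\<bar> \<le> B"
proof -
  have "f x \<le> (SUP \<xi>\<in>S. f \<xi>)" using assms by (intro cSUP_upper) (auto simp: bdd_above_def)
  moreover have "(SUP \<xi>\<in>S. f \<xi>) \<le> B" using assms by (intro cSUP_least) auto
  ultimately show ?thesis using assms(2)[OF assms(1)] by linarith
qed

lemma (in prob_space) threshold_coupling_geometric_rate:
  fixes X X' :: "nat \<Rightarrow> 'a \<Rightarrow> real"
  assumes [measurable]: "\<And>n. X n \<in> borel_measurable M" "\<And>n. X' n \<in> borel_measurable M"
    and near: "\<And>n a b. \<xi>\<^sub>0 - r \<le> a \<Longrightarrow> a \<le> b \<Longrightarrow> b \<le> \<xi>\<^sub>0 + r \<Longrightarrow>
                 prob {\<omega>\<in>space M. a < X n \<omega> \<and> X n \<omega> \<le> b} \<le> L * (b - a)"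
    and r: "0 < r" and alpha: "0 < \<alpha>" and rho: "0 < \<rho>" "\<rho> < 1"
    and integ: "eventually (\<lambda>n. integrable M (\<lambda>\<omega>. \<bar>X n \<omega> - X' n \<omega>\<bar> powr \<alpha>)) sequentially"
    and moment: "(\<lambda>n. expectation (\<lambda>\<omega>. \<bar>X n \<omega> - X' n \<omega>\<bar> powr \<alpha>) powr (1 / \<alpha>))
                   \<in> O(\<lambda>n. \<rho> ^ n)"
  shows "\<exists>\<sigma>. 0 < \<sigma> \<and> \<sigma> < 1 \<and>
           (\<lambda>n. SUP \<xi>\<in>{\<xi>. \<bar>\<xi> - \<xi>\<^sub>0\<bar> \<le> r/2}.
                 sqrt (expectation (\<lambda>\<omega>. \<bar>of_bool (X n \<omega> < \<xi>) - of_bool (X' n \<omega> < \<xi>)\<bar> ^ 2 :: real)))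
           \<in> O(\<lambda>n. \<sigma> ^ n)"
proof -
  define D where "D n \<xi> =
    expectation (\<lambda>\<omega>. \<bar>of_bool (X n \<omega> < \<xi>) - of_bool (X' n \<omega> < \<xi>)\<bar> ^ 2 :: real)" for n \<xi>
  have "prob {\<omega>\<in>space M. \<xi>\<^sub>0 - r < X 0 \<omega> \<and> X 0 \<omega> \<le> \<xi>\<^sub>0 + r} \<le> L * (2 * r)"
    using near[of "\<xi>\<^sub>0 - r" "\<xi>\<^sub>0 + r" 0] r by (simp add: algebra_simps)
  then have "0 \<le> L * (2 * r)" using measure_nonneg order_trans by blast
  then have L: "0 \<le> L" using r by (simp add: zero_le_mult_iff)
  from moment obtain c where c: "c > 0" and evc: "eventually (\<lambda>n.
      norm (expectation (\<lambda>\<omega>. \<bar>X n \<omega> - X' n \<omega>\<bar> powr \<alpha>) powr (1/\<alpha>)) \<le> c * norm (\<rho> ^ n)) sequentially"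
    by (elim landau_o.bigE) auto
  define s where "s = sqrt \<rho>"
  have s: "0 < s" "s < 1" "\<rho> ^ n = (s ^ n)\<^sup>2" for n
    using rho by (auto simp: s_def power_mult_distrib[symmetric] power2_eq_square)
  define q where "q = max s (s powr \<alpha>)"
  have q: "0 < q" "q < 1" using s powr_less_mono2[of \<alpha> s 1] alpha by (auto simp: q_def)
  define K where "K = 2 * L + c powr \<alpha>"
  have "(\<lambda>n. s ^ n) \<longlonglongrightarrow> 0" using s by (intro LIMSEQ_power_zero) auto
  then have "eventually (\<lambda>n. s ^ n < r/2) sequentially" using r by (intro order_tendstoD(2)) auto
  then have bound: "eventually (\<lambda>n. \<forall>\<xi>. \<bar>\<xi> - \<xi>\<^sub>0\<bar> \<le> r/2 \<longrightarrow> D n \<xi> \<le> K * q ^ n) sequentially"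
    using integ evc
  proof eventually_elim
    case (elim n)
    show ?case
    proof (intro allI impI)
      fix \<xi> assume \<xi>: "\<bar>\<xi> - \<xi>\<^sub>0\<bar> \<le> r/2"
      have "D n \<xi> \<le> L * (2 * s ^ n) + c powr \<alpha> * (s ^ n) powr \<alpha>"
        unfolding D_def
      proof (rule expectation_threshold_disagree_le)
        show "prob {\<omega>\<in>space M. \<xi> - s ^ n < X n \<omega> \<and> X n \<omega> \<le> \<xi> + s ^ n} \<le> L * (2 * s ^ n)"
        proof -
          have "\<xi>\<^sub>0 - r \<le> \<xi> - s ^ n" "\<xi> + s ^ n \<le> \<xi>\<^sub>0 + r"
            using elim \<xi> unfolding abs_le_iff by linarith+
          then show ?thesis using near[of "\<xi> - s ^ n" "\<xi> + s ^ n" n] s by simp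
        qed
        show "expectation (\<lambda>\<omega>. \<bar>X n \<omega> - X' n \<omega>\<bar> powr \<alpha>) powr (1/\<alpha>) \<le> c * (s ^ n)\<^sup>2"
          using elim s rho by simp
      qed (use elim alpha s in auto)
      also have "\<dots> \<le> K * q ^ n"
      proof -
        have "(s ^ n) powr \<alpha> = (s powr \<alpha>) ^ n"
          using s by (simp add: powr_realpow[symmetric] powr_powr mult.commute)
        moreover have "s ^ n \<le> q ^ n" "(s powr \<alpha>) ^ n \<le> q ^ n"
          using s by (auto simp: q_def intro!: power_mono)
        ultimately have "L * (2 * s ^ n) \<le> L * (2 * q ^ n)"
            "c powr \<alpha> * (s ^ n) powr \<alpha> \<le> c powr \<alpha> * q ^ n"
          using L by (auto intro: mult_left_mono)
        then show ?thesis by (simp add: K_def algebra_simps)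
      qed
      finally show "D n \<xi> \<le> K * q ^ n" .
    qed
  qed
  have "(\<lambda>n. SUP \<xi>\<in>{\<xi>. \<bar>\<xi> - \<xi>\<^sub>0\<bar> \<le> r/2}. sqrt (D n \<xi>)) \<in> O(\<lambda>n. sqrt q ^ n)"
  proof (rule bigoI[where c="sqrt K"])
    show "eventually (\<lambda>n. norm (SUP \<xi>\<in>{\<xi>. \<bar>\<xi> - \<xi>\<^sub>0\<bar> \<le> r/2}. sqrt (D n \<xi>))
        \<le> sqrt K * norm (sqrt q ^ n)) sequentially"
      using bound
    proof eventually_elim
      case (elim n)
      have "sqrt (D n \<xi>) \<le> sqrt K * sqrt q ^ n" if "\<bar>\<xi> - \<xi>\<^sub>0\<bar> \<le> r/2" for \<xi>
      proof -
        have "sqrt (D n \<xi>) \<le> sqrt (K * q ^ n)" using elim that by (intro real_sqrt_le_mono) blast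
        also have "\<dots> = sqrt K * sqrt q ^ n" by (simp add: real_sqrt_mult real_sqrt_power)
        finally show ?thesis .
      qed
      moreover have "0 \<le> sqrt (D n \<xi>)" for \<xi>
        unfolding D_def by (intro real_sqrt_ge_zero Bochner_Integration.integral_nonneg) auto
      ultimately show ?case
        using r q by (auto intro!: abs_cSUP_le_of_nonneg[of \<xi>\<^sub>0])
    qed
  qed
  then show ?thesis using q unfolding D_def by (intro exI[of _ "sqrt q"]) auto
qed

theorem proposition3p1:
  fixes M :: "'a measure" and N :: "'b measure"
    and eps epss :: "int \<Rightarrow> 'a \<Rightarrow> 'b"
    and Y :: "(nat \<Rightarrow> 'b) \<Rightarrow> real"
    and \<tau> \<alpha> \<rho> :: real
  assumes M: "prob_space M"
    and meas_eps: "\<And>t. eps t \<in> measurable M N"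
    and meas_epss: "\<And>t. epss t \<in> measurable M N"
    and indep: "prob_space.indep_vars M (\<lambda>_. N)
                  (\<lambda>i. case i of Inl t \<Rightarrow> eps t | Inr t \<Rightarrow> epss t) UNIV"
    and ident_eps: "\<And>t. distr M N (eps t) = distr M N (eps 0)"
    and ident_epss: "\<And>t. distr M N (epss t) = distr M N (eps 0)"
    and meas_Y: "Y \<in> borel_measurable (PiM UNIV (\<lambda>_::nat. N))"
    and tau: "0 < \<tau>" "\<tau> < 1"
    and lip: "\<exists>r>0. \<exists>L. L-lipschitz_on
                {Inf {x. measure M {\<omega>\<in>space M. Xproc Y eps 0 \<omega> \<le> x} \<ge> \<tau>} - r ..
                 Inf {x. measure M {\<omega>\<in>space M. Xproc Y eps 0 \<omega> \<le> x} \<ge> \<tau>} + r}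
                (\<lambda>x. measure M {\<omega>\<in>space M. Xproc Y eps 0 \<omega> \<le> x})"
    and alpha: "\<alpha> > 0" and rho: "0 < \<rho>" "\<rho> < 1"
    and integ: "eventually (\<lambda>n. integrable M
                  (\<lambda>\<omega>. \<bar>Xproc Y eps (int n) \<omega> - Xcoupled Y eps epss n \<omega>\<bar> powr \<alpha>)) sequentially"
    and moment: "(\<lambda>n. (integral\<^sup>L M
                  (\<lambda>\<omega>. \<bar>Xproc Y eps (int n) \<omega> - Xcoupled Y eps epss n \<omega>\<bar> powr \<alpha>)) powr (1 / \<alpha>))
                 \<in> O(\<lambda>n. \<rho> ^ n)"
  shows "\<exists>\<delta>>0. \<exists>\<sigma>. 0 < \<sigma> \<and> \<sigma> < 1 \<and>
           (\<lambda>n. SUP \<xi>\<in>{\<xi>. \<bar>\<xi> - Inf {x. measure M {\<omega>\<in>space M. Xproc Y eps 0 \<omega> \<le> x} \<ge> \<tau>}\<bar> \<le> \<delta>}.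
                 sqrt (integral\<^sup>L M (\<lambda>\<omega>. \<bar>of_bool (Xproc Y eps (int n) \<omega> < \<xi>)
                                         - of_bool (Xcoupled Y eps epss n \<omega> < \<xi>)\<bar> ^ 2 :: real)))
           \<in> O(\<lambda>n. \<sigma> ^ n)"
proof -
  interpret prob_space M by (rule M)
  define \<xi>\<^sub>0 where "\<xi>\<^sub>0 = Inf {x. measure M {\<omega>\<in>space M. Xproc Y eps 0 \<omega> \<le> x} \<ge> \<tau>}"
  obtain r L where r: "r > 0"
    and lip_cdf: "L-lipschitz_on {\<xi>\<^sub>0 - r..\<xi>\<^sub>0 + r} (\<lambda>x. prob {\<omega>\<in>space M. Xproc Y eps 0 \<omega> \<le> x})"
    using lip unfolding \<xi>\<^sub>0_def by blast
  have meas_X: "Xproc Y eps t \<in> borel_measurable M" for t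
    using measurable_Xproc[OF meas_eps meas_Y] .
  have meas_X': "Xcoupled Y eps epss n \<in> borel_measurable M" for n
    using measurable_Xcoupled[OF meas_eps meas_epss meas_Y] .
  have indep_eps: "indep_vars (\<lambda>_. N) eps UNIV"
    using indep_vars_reindex[OF indep, of Inl UNIV] by simp
  have stationary: "distr M borel (Xproc Y eps t) = distr M borel (Xproc Y eps 0)" for t
    using distr_Xproc[OF meas_eps indep_eps ident_eps meas_Y] by metis
  have near: "prob {\<omega>\<in>space M. a < Xproc Y eps (int n) \<omega> \<and> Xproc Y eps (int n) \<omega> \<le> b} \<le> L * (b - a)"
    if "\<xi>\<^sub>0 - r \<le> a" "a \<le> b" "b \<le> \<xi>\<^sub>0 + r" for n a b
    using prob_interval_le_lipschitz_cdf[OF meas_X meas_X stationary lip_cdf that] .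
  obtain \<sigma> where "0 < \<sigma>" "\<sigma> < 1"
    "(\<lambda>n. SUP \<xi>\<in>{\<xi>. \<bar>\<xi> - \<xi>\<^sub>0\<bar> \<le> r/2}.
          sqrt (integral\<^sup>L M (\<lambda>\<omega>. \<bar>of_bool (Xproc Y eps (int n) \<omega> < \<xi>)
                                  - of_bool (Xcoupled Y eps epss n \<omega> < \<xi>)\<bar> ^ 2 :: real)))
      \<in> O(\<lambda>n. \<sigma> ^ n)"
    using threshold_coupling_geometric_rate[OF meas_X meas_X' near r alpha rho integ moment] by blast
  then show ?thesis unfolding \<xi>\<^sub>0_def using r by (intro exI[of _ "r/2"]) auto
qed

end
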